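(* Let $\overline{Q}(t,z)=\sum_{n\ge0}\overline{Q}_n(t)\frac{z^n}{n!}$, where $\overline{Q}_n(t)=\sum_{\pi}t^{\operatorname{des}(\pi)}$, the sum ranging over all quasi-Stirling permutations $\pi$ of size $n$ (so $\overline{Q}_0(t)=1$). Let $A(t,z)=\sum_{n\ge0}A_n(t)\frac{z^n}{n!}=\frac{1-t}{1-te^{(1-t)z}}$, where $A_n(t)=\sum_{\sigma\in S_n}t^{\operatorname{des}(\sigma)}$ are the Eulerian polynomials ($A_0(t)=1$). Then $\overline{Q}(t,z)=A(t,z\overline{Q}(t,z))$, that is, $$\overline{Q}(t,z)=\frac{1-t}{1-t\,e^{(1-t)z\overline{Q}(t,z)}}.$$ In particular, for all $n\ge0$, $$\overline{Q}_n(t)=\frac{n!}{n+1}\,[z^n]A(t,z)^{n+1}.$$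
   Context: A quasi-Stirling permutation of size $n$ is a permutation $\pi_1\cdots\pi_{2n}$ of the multiset $\{1,1,2,2,\dots,n,n\}$ with no indices $i<j<k<\ell$ such that $\pi_i=\pi_k$ and $\pi_j=\pi_\ell$; for $n=0$ there is only the empty permutation. For a sequence $\pi_1\cdots\pi_r$, an index $i\in\{1,\dots,r\}$ is a descent if $\pi_i>\pi_{i+1}$ or $i=r$, and $\operatorname{des}$ counts descents. $S_n$ is the set of permutations of $\{1,\dots,n\}$. $[z^n]F(z)$ denotes the coefficient of $z^n$ in $F$. *)

theory Defs
  imports "HOL-Computational_Algebra.Computational_Algebra"
begin

definition des :: "nat list \<Rightarrow> nat" where
  "des xs = card {i. i < length xs \<and> (i = length xs - 1 \<or> xs ! i > xs ! Suc i)}"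

text \<open>Quasi-Stirling permutations of size n: permutations of the multiset
  {1,1,...,n,n} avoiding the pattern 1212 / 2121.\<close>
definition quasi_stirling :: "nat \<Rightarrow> nat list set" where
  "quasi_stirling n = {xs. length xs = 2 * n \<and> set xs \<subseteq> {1..n}
     \<and> (\<forall>i\<in>{1..n}. count_list xs i = 2)
     \<and> \<not> (\<exists>a b c d. a < b \<and> b < c \<and> c < d \<and> d < length xs
            \<and> xs ! a = xs ! c \<and> xs ! b = xs ! d)}"

definition perms_list :: "nat \<Rightarrow> nat list set" where
  "perms_list n = {xs. distinct xs \<and> set xs = {1..n}}"

definition Qbar :: "nat \<Rightarrow> rat poly" where
  "Qbar n = (\<Sum>xs\<in>quasi_stirling n. monom 1 (des xs))"

definition Eulerian :: "nat \<Rightarrow> rat poly" where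
  "Eulerian n = (\<Sum>xs\<in>perms_list n. monom 1 (des xs))"

text \<open>Exponential generating functions in z with coefficients in Q[t].\<close>
definition QbarF :: "rat poly fps" where
  "QbarF = Abs_fps (\<lambda>n. smult (1 / fact n) (Qbar n))"

definition EulerF :: "rat poly fps" where
  "EulerF = Abs_fps (\<lambda>n. smult (1 / fact n) (Eulerian n))"

text \<open>e^((1-t)z) as a power series in z over Q[t].\<close>
definition exp_1mt :: "rat poly fps" where
  "exp_1mt = Abs_fps (\<lambda>n. smult (1 / fact n) ([:1, -1:] ^ n))"

end

theory Submission
  imports Defs "HOL-Combinatorics.Multiset_Permutations" "HOL-Library.Sublist"
begin

text \<open>A nonempty quasi-Stirling permutation factors uniquely as \<open>c \<sigma> c \<tau>\<close> with \<open>\<sigma>\<close>, \<open>\<tau>\<close>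
  quasi-Stirling on disjoint alphabets; iterating on \<open>\<tau>\<close> gives top-level blocks
  \<open>c\<^sub>1 \<sigma>\<^sub>1 c\<^sub>1 \<dots> c\<^sub>k \<sigma>\<^sub>k c\<^sub>k\<close> whose letters \<open>c\<^sub>1 \<dots> c\<^sub>k\<close> form an arbitrary permutation.
  Counting descents of words framed by boundary letters, the block \<open>c\<^sub>i \<sigma>\<^sub>i c\<^sub>i\<close> contributes
  the descents of \<open>\<sigma>\<^sub>i\<close> framed by \<open>c\<^sub>i\<close>, and these are distributed as for an unframed
  quasi-Stirling permutation: for permutations this follows by rotating the word at its
  maximal letter, and it passes to quasi-Stirling permutations by induction along the
  decomposition. Hence \<open>Q\<^sub>n = \<Sum>\<^sub>k (n choose k) A\<^sub>k (n - k)! [z\<^bsup>n-k\<^esup>] Q\<^sup>k\<close>, that is \<open>Q = A(t, z Q)\<close>.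
  Splitting permutations at their maximal letter gives the Riccati equation
  \<open>A' = (A + t - 1) A\<close>, solved by the closed form, and the coefficient formula is
  Lagrange inversion.\<close>

section \<open>Descents of framed words\<close>

fun framed_des :: "nat \<Rightarrow> nat list \<Rightarrow> nat \<Rightarrow> nat" where
  "framed_des u [] v = of_bool (v < u)"
| "framed_des u (x # xs) v = of_bool (x < u) + framed_des x xs v"

lemma framed_des_append: "framed_des u (xs @ y # ys) v = framed_des u xs y + framed_des y ys v"
  by (induction xs arbitrary: u) auto

lemma des_Cons_Cons: "des (x # y # ys) = of_bool (y < x) + des (y # ys)"
proof -
  define M where "M = {i. i = Suc (length ys) \<or> (x # y # ys) ! i > (x # y # ys) ! Suc i}"
  have "des (x # y # ys) = card {i \<in> M. i < Suc (Suc (length ys))}"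
    unfolding des_def M_def by (simp add: conj_commute)
  also have "\<dots> = of_bool (y < x) + card {i. Suc i \<in> M \<and> i < Suc (length ys)}"
    using card_less_Suc[of M] card_less_Suc2[of M] by (cases "0 \<in> M") (auto simp: M_def)
  also have "{i. Suc i \<in> M \<and> i < Suc (length ys)}
      = {i. i < length (y # ys) \<and> (i = length (y # ys) - 1 \<or> (y # ys) ! i > (y # ys) ! Suc i)}"
    by (auto simp: M_def)
  finally show ?thesis by (simp add: des_def)
qed

lemma des_Cons_eq_framed_des: "0 \<notin> set (x # xs) \<Longrightarrow> des (x # xs) = framed_des x xs 0"
proof (induction xs arbitrary: x)
  case Nil
  have "{i. i < length [x] \<and> (i = length [x] - 1 \<or> [x] ! i > [x] ! Suc i)} = {0}"
    by auto
  with Nil show ?case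
    by (simp add: des_def)
qed (simp add: des_Cons_Cons)

lemma des_eq_framed_des: "0 \<notin> set xs \<Longrightarrow> des xs = framed_des 0 xs 0"
  by (cases xs) (simp add: des_def, simp add: des_Cons_eq_framed_des)

lemma framed_des_right_end:
  "\<forall>x\<in>set xs. 0 < x \<and> x < M \<Longrightarrow> u < M
    \<Longrightarrow> framed_des u xs 0 = framed_des u xs M + of_bool (xs \<noteq> [] \<or> 0 < u)"
  by (induction xs arbitrary: u) auto

lemma framed_des_left_end:
  "\<forall>x\<in>set xs. x < M \<Longrightarrow> v < M \<Longrightarrow> framed_des M xs v = Suc (framed_des 0 xs v)"
  by (cases xs) auto

lemma sum_Pow_card:
  fixes f :: "nat \<Rightarrow> 'a::comm_semiring_1"
  assumes "finite T"
  shows "(\<Sum>A\<in>Pow T. f (card A)) = (\<Sum>k\<le>card T. of_nat (card T choose k) * f k)"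
proof -
  have "(\<Sum>A\<in>Pow T. f (card A)) = (\<Sum>k\<le>card T. \<Sum>A\<in>{A\<in>Pow T. card A = k}. f (card A))"
    by (rule sum.group[symmetric]) (use assms in \<open>auto intro: card_mono\<close>)
  also have "\<dots> = (\<Sum>k\<le>card T. of_nat (card T choose k) * f k)"
  proof (rule sum.cong[OF refl])
    fix k
    have "{A\<in>Pow T. card A = k} = {A. A \<subseteq> T \<and> card A = k}" by auto
    then show "(\<Sum>A\<in>{A\<in>Pow T. card A = k}. f (card A)) = of_nat (card T choose k) * f k"
      using n_subsets[OF assms, of k] by simp
  qed
  finally show ?thesis .
qed

lemma sum_Pow_Diff_swap:
  assumes "finite T"
  shows "(\<Sum>X\<in>Pow T. \<Sum>Y\<in>Pow (T - X). f X Y) = (\<Sum>Y\<in>Pow T. \<Sum>X\<in>Pow (T - Y). f X Y)"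
proof -
  have Pow_Diff: "Pow (T - X) = {Y\<in>Pow T. X \<inter> Y = {}}" if "X \<subseteq> T" for X
    using that by auto
  have "(\<Sum>X\<in>Pow T. \<Sum>Y\<in>Pow (T - X). f X Y) = (\<Sum>X\<in>Pow T. \<Sum>Y\<in>{Y\<in>Pow T. X \<inter> Y = {}}. f X Y)"
    by (simp add: Pow_Diff)
  also have "\<dots> = (\<Sum>Y\<in>Pow T. \<Sum>X\<in>{X\<in>Pow T. X \<inter> Y = {}}. f X Y)"
    by (rule sum.swap_restrict) (use assms in auto)
  also have "\<dots> = (\<Sum>Y\<in>Pow T. \<Sum>X\<in>Pow (T - Y). f X Y)"
    by (simp add: Pow_Diff Int_commute)
  finally show ?thesis .
qed

lemma sum_Pow_complement:
  assumes "finite T"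
  shows "(\<Sum>A\<in>Pow T. g A (T - A)) = (\<Sum>A\<in>Pow T. g (T - A) A)"
  by (rule sum.reindex_bij_witness[where i="\<lambda>A. T - A" and j="\<lambda>A. T - A"])
    (auto simp: Diff_Diff_Int Int_absorb1)

lemma sum_Pow_sum_member:
  assumes "finite S"
  shows "(\<Sum>C\<in>Pow S. \<Sum>c\<in>C. h C c) = (\<Sum>c\<in>S. \<Sum>C\<in>Pow (S - {c}). h (insert c C) c)"
proof -
  have "(\<Sum>C\<in>Pow S. \<Sum>c\<in>C. h C c) = (\<Sum>C\<in>Pow S. \<Sum>c\<in>{c\<in>S. c \<in> C}. h C c)"
    by (rule sum.cong[OF refl], rule sum.cong) auto
  also have "\<dots> = (\<Sum>c\<in>S. \<Sum>C\<in>{C\<in>Pow S. c \<in> C}. h C c)"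
    by (rule sum.swap_restrict) (use assms in auto)
  also have "\<dots> = (\<Sum>c\<in>S. \<Sum>C\<in>Pow (S - {c}). h (insert c C) c)"
  proof (rule sum.cong[OF refl])
    fix c assume "c \<in> S"
    have "{C\<in>Pow S. c \<in> C} = insert c ` Pow (S - {c})"
    proof
      show "{C\<in>Pow S. c \<in> C} \<subseteq> insert c ` Pow (S - {c})"
      proof
        fix C assume "C \<in> {C\<in>Pow S. c \<in> C}"
        then have "C = insert c (C - {c})" "C - {c} \<in> Pow (S - {c})" by auto
        then show "C \<in> insert c ` Pow (S - {c})" by (rule image_eqI)
      qed
    qed (use \<open>c \<in> S\<close> in auto)
    moreover have "inj_on (insert c) (Pow (S - {c}))"
      by (rule inj_onI) auto
    ultimately show "(\<Sum>C\<in>{C\<in>Pow S. c \<in> C}. h C c) = (\<Sum>C\<in>Pow (S - {c}). h (insert c C) c)"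
      by (simp add: sum.reindex)
  qed
  finally show ?thesis .
qed

lemma sum_permutations_of_set_Cons:
  assumes "finite C" "C \<noteq> {}"
  shows "(\<Sum>xs\<in>permutations_of_set C. f xs) = (\<Sum>c\<in>C. \<Sum>xs\<in>permutations_of_set (C - {c}). f (c # xs))"
proof -
  have "(\<Sum>xs\<in>permutations_of_set C. f xs)
      = (\<Sum>c\<in>C. \<Sum>xs\<in>(\<lambda>xs. c # xs) ` permutations_of_set (C - {c}). f xs)"
    unfolding permutations_of_set_nonempty[OF assms(2)] by (rule sum.UNION_disjoint) (use assms in auto)
  then show ?thesis
    by (simp add: sum.reindex)
qed

lemma bij_betw_permutations_of_set_split:
  assumes "m \<in> D"
  shows "bij_betw (\<lambda>(A, \<alpha>, \<beta>). \<alpha> @ m # \<beta>)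
    (SIGMA A:Pow (D - {m}). permutations_of_set A \<times> permutations_of_set (D - {m} - A))
    (permutations_of_set D)"
    (is "bij_betw ?join ?T _")
proof (rule bij_betw_imageI)
  show "inj_on ?join ?T"
  proof (rule inj_onI)
    fix x y assume "x \<in> ?T" "y \<in> ?T" "?join x = ?join y"
    then obtain A \<alpha> \<beta> A' \<alpha>' \<beta>' where x: "x = (A, \<alpha>, \<beta>)" and y: "y = (A', \<alpha>', \<beta>')"
      and sets: "A \<subseteq> D - {m}" "set \<alpha> = A" "set \<beta> = D - {m} - A"
        "A' \<subseteq> D - {m}" "set \<alpha>' = A'" "set \<beta>' = D - {m} - A'"
      and "\<alpha> @ m # \<beta> = \<alpha>' @ m # \<beta>'"
      by (auto simp: permutations_of_set_def)
    then have "\<alpha> = \<alpha>' \<and> \<beta> = \<beta>'"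
      by (subst (asm) append_Cons_eq_iff) auto
    with x y sets show "x = y" by auto
  qed
  show "?join ` ?T = permutations_of_set D"
  proof
    show "?join ` ?T \<subseteq> permutations_of_set D"
      using assms by (auto simp: permutations_of_set_def)
    show "permutations_of_set D \<subseteq> ?join ` ?T"
    proof
      fix xs assume xs: "xs \<in> permutations_of_set D"
      then obtain \<alpha> \<beta> where "xs = \<alpha> @ m # \<beta>"
        using assms by (metis permutations_of_setD(1) split_list)
      with xs have "(set \<alpha>, \<alpha>, \<beta>) \<in> ?T" "xs = ?join (set \<alpha>, \<alpha>, \<beta>)"
        by (auto simp: permutations_of_set_def)
      then show "xs \<in> ?join ` ?T"
        by blast
    qed
  qed
qed

lemma sum_permutations_of_set_split:
  assumes "finite D" "m \<in> D"
  shows "(\<Sum>xs\<in>permutations_of_set D. f xs) = (\<Sum>A\<in>Pow (D - {m}).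
     \<Sum>\<alpha>\<in>permutations_of_set A. \<Sum>\<beta>\<in>permutations_of_set (D - {m} - A). f (\<alpha> @ m # \<beta>))"
proof -
  have "(\<Sum>xs\<in>permutations_of_set D. f xs) = (\<Sum>(A, \<alpha>, \<beta>)\<in>(SIGMA A:Pow (D - {m}).
      permutations_of_set A \<times> permutations_of_set (D - {m} - A)). f (\<alpha> @ m # \<beta>))"
    using sum.reindex_bij_betw[OF bij_betw_permutations_of_set_split[OF assms(2)], of f]
    by (simp add: case_prod_unfold)
  also have "\<dots> = (\<Sum>A\<in>Pow (D - {m}).
      \<Sum>(\<alpha>, \<beta>)\<in>permutations_of_set A \<times> permutations_of_set (D - {m} - A). f (\<alpha> @ m # \<beta>))"
    using assms(1) by (intro sum.Sigma[symmetric]) auto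
  finally show ?thesis
    by (simp add: sum.cartesian_product)
qed

section \<open>Eulerian polynomials\<close>

abbreviation t :: "rat poly" where
  "t \<equiv> monom 1 1"

definition perm_des_poly :: "nat \<Rightarrow> nat set \<Rightarrow> nat \<Rightarrow> rat poly" where
  "perm_des_poly u D v = (\<Sum>xs\<in>permutations_of_set D. monom 1 (framed_des u xs v))"

lemma Eulerian_eq_perm_des_poly: "Eulerian n = perm_des_poly 0 {1..n} 0"
proof -
  have "perms_list n = permutations_of_set {1..n}"
    by (auto simp: perms_list_def permutations_of_set_def)
  moreover have "des xs = framed_des 0 xs 0" if "xs \<in> permutations_of_set {1..n}" for xs
    using that by (intro des_eq_framed_des) (auto simp: permutations_of_set_def)
  ultimately show ?thesis
    unfolding Eulerian_def perm_des_poly_def by simp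
qed

lemma Eulerian_0: "Eulerian 0 = 1"
  by (simp add: Eulerian_eq_perm_des_poly perm_des_poly_def)

lemma perm_des_poly_empty: "perm_des_poly u {} v = monom 1 (of_bool (v < u))"
  by (simp add: perm_des_poly_def)

lemma perm_des_poly_Cons:
  assumes "finite C" "C \<noteq> {}"
  shows "perm_des_poly u C v = (\<Sum>c\<in>C. monom 1 (of_bool (c < u)) * perm_des_poly c (C - {c}) v)"
  unfolding perm_des_poly_def
  by (subst sum_permutations_of_set_Cons[OF assms]) (simp add: mult_monom sum_distrib_left)

lemma perm_des_poly_split:
  assumes "finite D" "m \<in> D"
  shows "perm_des_poly u D v = (\<Sum>A\<in>Pow (D - {m}). perm_des_poly u A m * perm_des_poly m (D - {m} - A) v)"
  unfolding perm_des_poly_def sum_permutations_of_set_split[OF assms]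
  by (simp add: framed_des_append mult_monom sum_product)

lemma perm_des_poly_right_above:
  assumes "\<forall>x\<in>A. 0 < x \<and> x < M" "u < M"
  shows "t * perm_des_poly u A M = (if A = {} \<and> u = 0 then t else perm_des_poly u A 0)"
proof (cases "A = {}")
  case False
  have "t * monom 1 (framed_des u \<alpha> M) = monom 1 (framed_des u \<alpha> 0)" if "\<alpha> \<in> permutations_of_set A" for \<alpha>
  proof -
    from that have "set \<alpha> = A"
      by (rule permutations_of_setD)
    with False have "\<alpha> \<noteq> []"
      by auto
    with \<open>set \<alpha> = A\<close> assms show ?thesis
      using framed_des_right_end[of \<alpha> M u] by (simp add: mult_monom)
  qed
  with False show ?thesis
    unfolding perm_des_poly_def sum_distrib_left by simp
qed (use assms in \<open>simp add: perm_des_poly_empty\<close>)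

lemma perm_des_poly_left_above:
  assumes "\<forall>x\<in>B. x < M" "v < M"
  shows "perm_des_poly M B v = t * perm_des_poly 0 B v"
proof -
  have "monom 1 (framed_des M \<beta> v) = t * monom 1 (framed_des 0 \<beta> v)" if "\<beta> \<in> permutations_of_set B" for \<beta>
    using that assms framed_des_left_end[of \<beta> M v] by (auto simp: mult_monom dest!: permutations_of_setD(1))
  then show ?thesis
    unfolding perm_des_poly_def sum_distrib_left by simp
qed

lemma perm_des_poly_split_Max:
  assumes "finite D" "0 \<notin> D" "D \<noteq> {}"
  shows "t * perm_des_poly 0 D 0 = (\<Sum>A\<in>Pow (D - {Max D}).
    (if A = {} then t else perm_des_poly 0 A 0) * (t * perm_des_poly 0 (D - {Max D} - A) 0))"
proof -
  define M where "M = Max D"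
  have "M \<in> D"
    using assms by (simp add: M_def)
  then have M: "M \<in> D" "0 < M"
    using assms(2) by (auto intro: gr0I)
  have below_M: "0 < x \<and> x < M" if "x \<in> D - {M}" for x
    using that assms(2) Max_ge[OF assms(1), of x] unfolding M_def by (auto intro: gr0I)
  have "t * perm_des_poly 0 D 0
      = (\<Sum>A\<in>Pow (D - {M}). t * perm_des_poly 0 A M * perm_des_poly M (D - {M} - A) 0)"
    by (simp add: perm_des_poly_split[OF assms(1) M(1)] sum_distrib_left mult.assoc)
  also have "\<dots> = (\<Sum>A\<in>Pow (D - {M}).
      (if A = {} then t else perm_des_poly 0 A 0) * (t * perm_des_poly 0 (D - {M} - A) 0))"
  proof (rule sum.cong[OF refl])
    fix A assume "A \<in> Pow (D - {M})"
    with below_M have A: "\<forall>x\<in>A. 0 < x \<and> x < M" and B: "\<forall>x\<in>D - {M} - A. x < M"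
      by auto
    have "t * perm_des_poly 0 A M = (if A = {} then t else perm_des_poly 0 A 0)"
      using perm_des_poly_right_above[OF A M(2)] by (simp only: simp_thms)
    moreover have "perm_des_poly M (D - {M} - A) 0 = t * perm_des_poly 0 (D - {M} - A) 0"
      using perm_des_poly_left_above[OF B M(2)] .
    ultimately show "t * perm_des_poly 0 A M * perm_des_poly M (D - {M} - A) 0
        = (if A = {} then t else perm_des_poly 0 A 0) * (t * perm_des_poly 0 (D - {M} - A) 0)"
      by (simp only:)
  qed
  finally show ?thesis
    by (simp add: M_def)
qed

lemma perm_des_poly_0_rec:
  assumes "finite D" "0 \<notin> D" "card D = Suc m"
    and IH: "\<And>A. A \<subseteq> D - {Max D} \<Longrightarrow> perm_des_poly 0 A 0 = Eulerian (card A)"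
  shows "t * perm_des_poly 0 D 0
    = (\<Sum>k\<le>m. of_nat (m choose k) * ((if k = 0 then t else Eulerian k) * (t * Eulerian (m - k))))"
proof -
  define T where "T = D - {Max D}"
  have "D \<noteq> {}" using assms(3) by auto
  then have T: "finite T" "card T = m"
    using assms(1,3) by (simp_all add: T_def)
  have "t * perm_des_poly 0 D 0
      = (\<Sum>A\<in>Pow T. (if A = {} then t else perm_des_poly 0 A 0) * (t * perm_des_poly 0 (T - A) 0))"
    unfolding T_def by (rule perm_des_poly_split_Max[OF assms(1,2) \<open>D \<noteq> {}\<close>])
  also have "\<dots> = (\<Sum>A\<in>Pow T. (if card A = 0 then t else Eulerian (card A)) * (t * Eulerian (m - card A)))"
  proof (rule sum.cong[OF refl])
    fix A assume "A \<in> Pow T"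
    with T have "finite A" "card (T - A) = m - card A"
      by (auto simp: card_Diff_subset finite_subset)
    then show "(if A = {} then t else perm_des_poly 0 A 0) * (t * perm_des_poly 0 (T - A) 0)
        = (if card A = 0 then t else Eulerian (card A)) * (t * Eulerian (m - card A))"
      using \<open>A \<in> Pow T\<close> IH[of A] IH[of "T - A"] by (auto simp: T_def)
  qed
  also have "\<dots> = (\<Sum>k\<le>m. of_nat (m choose k) * ((if k = 0 then t else Eulerian k) * (t * Eulerian (m - k))))"
    using sum_Pow_card[OF T(1), of "\<lambda>k. (if k = 0 then t else Eulerian k) * (t * Eulerian (m - k))"]
    by (simp only: T(2))
  finally show ?thesis .
qed

lemma perm_des_poly_0_eq_Eulerian:
  "finite D \<Longrightarrow> 0 \<notin> D \<Longrightarrow> perm_des_poly 0 D 0 = Eulerian (card D)"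
proof (induction "card D" arbitrary: D rule: less_induct)
  case less
  show ?case
  proof (cases "card D")
    case 0
    with less.prems show ?thesis by (simp add: perm_des_poly_def Eulerian_0)
  next
    case (Suc m)
    have rec: "t * perm_des_poly 0 E 0
        = (\<Sum>k\<le>m. of_nat (m choose k) * ((if k = 0 then t else Eulerian k) * (t * Eulerian (m - k))))"
      if E: "finite E" "0 \<notin> E" "card E = Suc m" for E
    proof (rule perm_des_poly_0_rec[OF E])
      fix A assume A: "A \<subseteq> E - {Max E}"
      have "E \<noteq> {}" using E(3) by auto
      with E have "card (E - {Max E}) = m" by simp
      with A E(1) have "card A < card D"
        using card_mono[of "E - {Max E}" A] Suc by simp
      with A E show "perm_des_poly 0 A 0 = Eulerian (card A)"
        by (intro less.hyps) (auto intro: finite_subset)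
    qed
    have "t * perm_des_poly 0 D 0 = t * perm_des_poly 0 {1..Suc m} 0"
      using rec[OF less.prems Suc] rec[of "{1..Suc m}"] by simp
    then show ?thesis
      by (simp add: Suc Eulerian_eq_perm_des_poly)
  qed
qed

lemma Eulerian_Suc:
  "Eulerian (Suc m) = (\<Sum>k\<le>m. of_nat (m choose k) * ((if k = 0 then t else Eulerian k) * Eulerian (m - k)))"
proof -
  have "t * Eulerian (Suc m)
      = (\<Sum>k\<le>m. of_nat (m choose k) * ((if k = 0 then t else Eulerian k) * (t * Eulerian (m - k))))"
    unfolding Eulerian_eq_perm_des_poly[of "Suc m"]
    by (rule perm_des_poly_0_rec) (auto intro!: perm_des_poly_0_eq_Eulerian intro: rev_finite_subset[OF finite_Diff[OF finite_atLeastAtMost]])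
  also have "\<dots> = t * (\<Sum>k\<le>m. of_nat (m choose k) * ((if k = 0 then t else Eulerian k) * Eulerian (m - k)))"
    by (simp add: sum_distrib_left mult.left_commute)
  finally show ?thesis by simp
qed

text \<open>Cutting the word \<open>v \<alpha> M \<beta> v\<close> at its maximal letter \<open>M\<close> and rotating it to
  \<open>0 \<beta> v \<alpha> 0\<close> preserves the number of descents.\<close>
lemma perm_des_poly_rotate:
  assumes "finite C" "C \<noteq> {}" "0 \<notin> C" "v \<notin> C" "0 < v" "v < Max C"
  shows "perm_des_poly v C v = perm_des_poly 0 (insert v (C - {Max C})) 0"
proof -
  define M where "M = Max C"
  define T where "T = C - {M}"
  have M: "M \<in> C" "v < M"
    using assms by (simp_all add: M_def)
  have below_M: "0 < x \<and> x < M" if "x \<in> T" for x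
    using that assms(3) Max_ge[OF assms(1), of x] unfolding T_def M_def by (auto intro: gr0I)
  have "perm_des_poly v C v = (\<Sum>A\<in>Pow T. perm_des_poly v A M * perm_des_poly M (T - A) v)"
    unfolding T_def by (rule perm_des_poly_split[OF assms(1) M(1)])
  also have "\<dots> = (\<Sum>A\<in>Pow T. perm_des_poly v A 0 * perm_des_poly 0 (T - A) v)"
  proof (rule sum.cong[OF refl])
    fix A assume "A \<in> Pow T"
    with below_M have "\<forall>x\<in>A. 0 < x \<and> x < M" "\<forall>x\<in>T - A. x < M"
      by auto
    with M assms(5) show "perm_des_poly v A M * perm_des_poly M (T - A) v
        = perm_des_poly v A 0 * perm_des_poly 0 (T - A) v"
      using perm_des_poly_right_above[of A M v]
      by (simp add: perm_des_poly_left_above mult.left_commute mult.assoc)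
  qed
  also have "\<dots> = (\<Sum>A\<in>Pow T. perm_des_poly 0 A v * perm_des_poly v (T - A) 0)"
    using sum_Pow_complement[of T "\<lambda>A B. perm_des_poly v A 0 * perm_des_poly 0 B v"] assms(1)
    by (simp add: T_def mult.commute)
  also have "\<dots> = perm_des_poly 0 (insert v T) 0"
  proof -
    have "insert v T - {v} = T"
      using assms(4) by (auto simp: T_def)
    with assms(1) show ?thesis
      using perm_des_poly_split[of "insert v T" v 0 0] by (simp add: T_def)
  qed
  finally show ?thesis
    by (simp add: T_def M_def)
qed

lemma perm_des_poly_cyclic:
  assumes "finite C" "0 \<notin> C" "v \<notin> C"
  shows "perm_des_poly v C v = Eulerian (card C)"
proof -
  consider "v = 0" | "0 < v" "\<forall>x\<in>C. x < v" | x where "0 < v" "x \<in> C" "v \<le> x"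
    by (meson gr0I not_le)
  then show ?thesis
  proof cases
    case 1
    then show ?thesis using assms by (simp add: perm_des_poly_0_eq_Eulerian)
  next
    case 2
    have "framed_des v xs v = framed_des 0 xs 0" if "xs \<in> permutations_of_set C" for xs
    proof (cases xs)
      case (Cons a l)
      have "a \<in> C" "\<forall>x\<in>set l. 0 < x \<and> x < v"
        using that 2 assms(2) Cons by (auto dest!: permutations_of_setD(1) intro: gr0I)
      then show ?thesis
        using Cons 2 assms(2) framed_des_right_end[of l v a] by (auto intro: gr0I)
    qed simp
    then have "perm_des_poly v C v = perm_des_poly 0 C 0"
      unfolding perm_des_poly_def by (simp cong: sum.cong)
    then show ?thesis using assms by (simp add: perm_des_poly_0_eq_Eulerian)
  next
    case 3
    have "v \<noteq> x"
      using 3 assms(3) by auto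
    then have "C \<noteq> {}" "v < Max C"
      using 3 Max_ge[OF assms(1) 3(2)] by auto
    moreover have "card (insert v (C - {Max C})) = card C"
      using \<open>C \<noteq> {}\<close> assms(1,3) by (simp add: card_gt_0_iff)
    ultimately show ?thesis
      using assms 3 by (simp add: perm_des_poly_rotate perm_des_poly_0_eq_Eulerian)
  qed
qed

section \<open>Quasi-Stirling permutations\<close>

inductive qstirling :: "'a list \<Rightarrow> bool" where
  Nil: "qstirling []"
| block: "qstirling \<sigma> \<Longrightarrow> qstirling \<tau> \<Longrightarrow> c \<notin> set \<sigma> \<Longrightarrow> c \<notin> set \<tau> \<Longrightarrow> set \<sigma> \<inter> set \<tau> = {}
    \<Longrightarrow> qstirling (c # \<sigma> @ c # \<tau>)"

lemma qstirling_count_list: "qstirling xs \<Longrightarrow> x \<in> set xs \<Longrightarrow> count_list xs x = 2"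
  by (induction rule: qstirling.induct) (auto simp: count_list_0_iff disjoint_iff)

lemma qstirling_length: "qstirling xs \<Longrightarrow> length xs = 2 * card (set xs)"
  by (induction rule: qstirling.induct) (auto simp: card_Un_disjoint card_insert_if)

lemma qstirling_append:
  "qstirling xs \<Longrightarrow> qstirling ys \<Longrightarrow> set xs \<inter> set ys = {} \<Longrightarrow> qstirling (xs @ ys)"
proof (induction arbitrary: ys rule: qstirling.induct)
  case (block \<sigma> \<tau> c)
  then have "qstirling (c # \<sigma> @ c # (\<tau> @ ys))"
    by (intro qstirling.block) auto
  then show ?case by simp
qed simp

lemma qstirling_filter: "qstirling xs \<Longrightarrow> qstirling (filter P xs)"
proof (induction rule: qstirling.induct)
  case (block \<sigma> \<tau> c)
  show ?case
  proof (cases "P c")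
    case True
    have "qstirling (c # filter P \<sigma> @ c # filter P \<tau>)"
      by (rule qstirling.block) (use block in auto)
    with True show ?thesis by simp
  next
    case False
    have "qstirling (filter P \<sigma> @ filter P \<tau>)"
      by (rule qstirling_append) (use block in auto)
    with False show ?thesis by simp
  qed
qed (simp add: qstirling.Nil)

lemma not_qstirling_abab: "\<not> qstirling [a, b, a, b]"
proof
  assume "qstirling [a, b, a, b]"
  then obtain \<sigma> \<tau> where "[b, a, b] = \<sigma> @ a # \<tau>" "qstirling \<sigma>" "a \<notin> set \<sigma>" "a \<notin> set \<tau>"
    by (auto elim: qstirling.cases)
  moreover have "\<not> qstirling [b]"
    by (auto elim: qstirling.cases)
  ultimately show False
    by (cases \<sigma>) (auto simp: Cons_eq_append_conv)
qed

lemma qstirling_imp_no_abab: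
  assumes "qstirling xs"
  shows "\<not> subseq [a, b, a, b] xs"
proof
  assume abab: "subseq [a, b, a, b] xs"
  define w where "w = filter (\<lambda>x. x = a \<or> x = b) xs"
  have "card (set w) \<le> card {a, b}"
    unfolding w_def by (intro card_mono) auto
  also have "card {a, b} \<le> 2"
    by (cases "a = b") auto
  finally have "card (set w) \<le> 2" .
  moreover have "qstirling w"
    unfolding w_def by (rule qstirling_filter[OF assms])
  moreover have "subseq [a, b, a, b] w"
    using subseq_filter[OF abab, of "\<lambda>x. x = a \<or> x = b"] unfolding w_def by simp
  ultimately have "qstirling w" "w = [a, b, a, b]"
    using qstirling_length list_emb_length subseq_same_length by fastforce+
  then show False
    using not_qstirling_abab by metis
qed

lemma no_abab_block_disjoint:
  assumes "\<forall>a b. \<not> subseq [a, b, a, b] (c # \<sigma> @ c # \<tau>)"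
  shows "set \<sigma> \<inter> set \<tau> = {}"
proof (rule ccontr)
  assume "set \<sigma> \<inter> set \<tau> \<noteq> {}"
  then obtain x where "subseq [x] \<sigma>" "subseq [c, x] (c # \<tau>)"
    by (auto simp: subseq_singleton_left)
  then have "subseq ([c] @ [x] @ [c, x]) ([c] @ \<sigma> @ c # \<tau>)"
    by (intro list_emb_append_mono) auto
  then have "subseq [c, x, c, x] (c # \<sigma> @ c # \<tau>)"
    by simp
  with assms show False
    by blast
qed

lemma count_list_block_parts:
  assumes "\<forall>x\<in>set (c # \<sigma> @ c # \<tau>). count_list (c # \<sigma> @ c # \<tau>) x = 2" "set \<sigma> \<inter> set \<tau> = {}"
  shows "\<forall>x\<in>set \<sigma>. count_list \<sigma> x = 2" "\<forall>x\<in>set \<tau>. count_list \<tau> x = 2"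
proof -
  have sum: "count_list \<sigma> x + count_list \<tau> x = 2" if "x \<in> set \<sigma> \<union> set \<tau>" for x
    using that assms(1)[rule_format, of x] by (auto split: if_splits simp: count_list_0_iff)
  show "\<forall>x\<in>set \<sigma>. count_list \<sigma> x = 2"
  proof
    fix x assume "x \<in> set \<sigma>"
    with assms(2) have "count_list \<tau> x = 0"
      by (auto simp: count_list_0_iff)
    with sum[of x] \<open>x \<in> set \<sigma>\<close> show "count_list \<sigma> x = 2"
      by simp
  qed
  show "\<forall>x\<in>set \<tau>. count_list \<tau> x = 2"
  proof
    fix x assume "x \<in> set \<tau>"
    with assms(2) have "count_list \<sigma> x = 0"
      by (auto simp: count_list_0_iff)
    with sum[of x] \<open>x \<in> set \<tau>\<close> show "count_list \<tau> x = 2"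
      by simp
  qed
qed

lemma no_abab_imp_qstirling:
  "(\<forall>x\<in>set xs. count_list xs x = 2) \<Longrightarrow> (\<forall>a b. \<not> subseq [a, b, a, b] xs) \<Longrightarrow> qstirling xs"
proof (induction xs rule: length_induct)
  case (1 xs)
  show ?case
  proof (cases xs)
    case (Cons c rest)
    have "count_list rest c = 1"
      using 1(2) Cons by simp
    then obtain \<sigma> \<tau> where rest: "rest = \<sigma> @ c # \<tau>" "c \<notin> set \<sigma>"
      by (metis count_notin zero_neq_one split_list_first)
    with \<open>count_list rest c = 1\<close> have "c \<notin> set \<tau>"
      by (simp add: count_list_0_iff)
    have xs: "xs = c # \<sigma> @ c # \<tau>"
      using Cons rest by simp
    with 1(3) have disjoint: "set \<sigma> \<inter> set \<tau> = {}"
      by (simp add: no_abab_block_disjoint)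
    have "qstirling z" if "z = \<sigma> \<or> z = \<tau>" for z
    proof -
      have "length z < length xs" "subseq z xs"
        using that xs by (auto intro: subseq_rev_drop_many subseq_drop_many)
      moreover have "\<forall>x\<in>set z. count_list z x = 2"
        using that count_list_block_parts[OF _ disjoint] 1(2) xs by blast
      ultimately show ?thesis
        using 1 subseq_order.trans by blast
    qed
    then show ?thesis
      using xs disjoint rest(2) \<open>c \<notin> set \<tau>\<close> by (simp add: qstirling.block)
  qed (simp add: qstirling.Nil)
qed

lemma subseq_imp_strict_mono_index:
  "subseq ys xs \<Longrightarrow> \<exists>f. strict_mono f \<and> (\<forall>i<length ys. f i < length xs \<and> xs ! f i = ys ! i)"
proof (induction rule: list_emb.induct)
  case (list_emb_Nil xs)
  show ?case by (rule exI[of _ id]) (simp add: strict_mono_def)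
next
  case (list_emb_Cons ys xs x)
  then obtain f where "strict_mono f" "\<forall>i<length ys. f i < length xs \<and> xs ! f i = ys ! i"
    by blast
  then show ?case
    by (intro exI[of _ "Suc \<circ> f"]) (auto simp: strict_mono_def)
next
  case (list_emb_Cons2 y x ys xs)
  then obtain f where f: "strict_mono f" "\<forall>i<length ys. f i < length xs \<and> xs ! f i = ys ! i"
    by blast
  define g where "g i = (case i of 0 \<Rightarrow> 0 | Suc k \<Rightarrow> Suc (f k))" for i
  have "strict_mono g"
    using f(1) by (auto simp: strict_mono_Suc_iff strict_mono_def g_def split: nat.split)
  moreover have "\<forall>i<length (y # ys). g i < length (x # xs) \<and> (x # xs) ! g i = (y # ys) ! i"
    using f(2) list_emb_Cons2.hyps by (auto simp: g_def nth_Cons' split: nat.split)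
  ultimately show ?case by blast
qed

lemma subseq_nth_Cons_drop:
  assumes "i < length xs" "j \<le> i" "subseq ys (drop (Suc i) xs)"
  shows "subseq (xs ! i # ys) (drop j xs)"
proof -
  have "drop j xs = take (i - j) (drop j xs) @ xs ! i # drop (Suc i) xs"
    using assms by (metis Cons_nth_drop_Suc append_take_drop_id drop_drop le_add_diff_inverse2)
  with assms(3) show ?thesis
    by (metis list_emb_Cons2 subseq_drop_many)
qed

lemma abab_indices_iff_subseq:
  "(\<exists>i j k l. i < j \<and> j < k \<and> k < l \<and> l < length xs \<and> xs ! i = xs ! k \<and> xs ! j = xs ! l)
    \<longleftrightarrow> (\<exists>a b. subseq [a, b, a, b] xs)"
proof
  assume "\<exists>i j k l. i < j \<and> j < k \<and> k < l \<and> l < length xs \<and> xs ! i = xs ! k \<and> xs ! j = xs ! l"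
  then obtain i j k l where ijkl: "i < j" "j < k" "k < l" "l < length xs" "xs ! i = xs ! k" "xs ! j = xs ! l"
    by blast
  have "subseq [xs ! l] (drop (Suc k) xs)"
    using ijkl by (intro subseq_nth_Cons_drop) auto
  then have "subseq [xs ! k, xs ! l] (drop (Suc j) xs)"
    using ijkl by (intro subseq_nth_Cons_drop) auto
  then have "subseq [xs ! j, xs ! k, xs ! l] (drop (Suc i) xs)"
    using ijkl by (intro subseq_nth_Cons_drop) auto
  then have "subseq [xs ! i, xs ! j, xs ! k, xs ! l] (drop 0 xs)"
    using ijkl by (intro subseq_nth_Cons_drop) auto
  with ijkl show "\<exists>a b. subseq [a, b, a, b] xs"
    by auto
next
  assume "\<exists>a b. subseq [a, b, a, b] xs"
  then obtain a b where "subseq [a, b, a, b] xs"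
    by blast
  from subseq_imp_strict_mono_index[OF this] obtain f
    where f: "strict_mono f" "\<forall>i<4. f i < length xs \<and> xs ! f i = [a, b, a, b] ! i"
    by auto
  then have "f 0 < f 1" "f 1 < f 2" "f 2 < f 3"
    by (simp_all add: strict_mono_less)
  moreover have "f 3 < length xs" "xs ! f 0 = xs ! f 2" "xs ! f 1 = xs ! f 3"
    using f(2)[rule_format, of 0] f(2)[rule_format, of 1] f(2)[rule_format, of 2] f(2)[rule_format, of 3]
    by simp_all
  ultimately show "\<exists>i j k l. i < j \<and> j < k \<and> k < l \<and> l < length xs \<and> xs ! i = xs ! k \<and> xs ! j = xs ! l"
    by blast
qed

definition qstirling_on :: "'a set \<Rightarrow> 'a list set" where
  "qstirling_on S = {xs. qstirling xs \<and> set xs = S}"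

lemma quasi_stirling_eq_qstirling_on: "quasi_stirling n = qstirling_on {1..n}"
proof (intro set_eqI iffI)
  fix xs assume xs: "xs \<in> quasi_stirling n"
  then have count: "\<forall>i\<in>{1..n}. count_list xs i = 2" and "set xs \<subseteq> {1..n}"
    by (auto simp: quasi_stirling_def)
  moreover have "{1..n} \<subseteq> set xs"
    using count by (metis count_notin subsetI zero_neq_numeral)
  ultimately have "set xs = {1..n}"
    by blast
  moreover from xs have "\<forall>a b. \<not> subseq [a, b, a, b] xs"
    using abab_indices_iff_subseq[of xs] by (auto simp: quasi_stirling_def)
  ultimately show "xs \<in> qstirling_on {1..n}"
    using count by (auto simp: qstirling_on_def intro: no_abab_imp_qstirling)
next
  fix xs assume "xs \<in> qstirling_on {1..n}"
  then have "qstirling xs" "set xs = {1..n}"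
    by (auto simp: qstirling_on_def)
  then show "xs \<in> quasi_stirling n"
    using qstirling_length qstirling_count_list qstirling_imp_no_abab abab_indices_iff_subseq[of xs]
    unfolding quasi_stirling_def by fastforce
qed

lemma finite_qstirling_on: "finite S \<Longrightarrow> finite (qstirling_on S)"
  by (rule finite_subset[of _ "{xs. set xs \<subseteq> S \<and> length xs \<le> 2 * card S}"])
    (auto simp: qstirling_on_def qstirling_length intro: finite_lists_length_le)

lemma bij_betw_qstirling_on_blocks:
  assumes "S \<noteq> {}"
  shows "bij_betw (\<lambda>(c, S1, \<sigma>, \<tau>). c # \<sigma> @ c # \<tau>)
    (SIGMA c:S. SIGMA S1:Pow (S - {c}). qstirling_on S1 \<times> qstirling_on (S - {c} - S1)) (qstirling_on S)"
    (is "bij_betw ?join ?T _")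
proof (rule bij_betw_imageI)
  show "inj_on ?join ?T"
  proof (rule inj_onI)
    fix x y assume "x \<in> ?T" "y \<in> ?T" "?join x = ?join y"
    then obtain c S1 \<sigma> \<tau> S1' \<sigma>' \<tau>' where x: "x = (c, S1, \<sigma>, \<tau>)" and y: "y = (c, S1', \<sigma>', \<tau>')"
      and sets: "S1 \<subseteq> S - {c}" "set \<sigma> = S1" "set \<tau> = S - {c} - S1"
        "S1' \<subseteq> S - {c}" "set \<sigma>' = S1'" "set \<tau>' = S - {c} - S1'"
      and "\<sigma> @ c # \<tau> = \<sigma>' @ c # \<tau>'"
      unfolding qstirling_on_def by auto
    then have "\<sigma> = \<sigma>' \<and> \<tau> = \<tau>'"
      by (subst (asm) append_Cons_eq_iff) auto
    with x y sets show "x = y" by auto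
  qed
  show "?join ` ?T = qstirling_on S"
  proof
    show "?join ` ?T \<subseteq> qstirling_on S"
      by (auto simp: qstirling_on_def intro!: qstirling.block)
    show "qstirling_on S \<subseteq> ?join ` ?T"
    proof
      fix z assume "z \<in> qstirling_on S"
      with assms have "qstirling z" "set z = S" "z \<noteq> []"
        by (auto simp: qstirling_on_def)
      then obtain c \<sigma> \<tau> where "z = c # \<sigma> @ c # \<tau>" "qstirling \<sigma>" "qstirling \<tau>"
        "c \<notin> set \<sigma>" "c \<notin> set \<tau>" "set \<sigma> \<inter> set \<tau> = {}"
        by (auto elim: qstirling.cases)
      with \<open>set z = S\<close> have "(c, set \<sigma>, \<sigma>, \<tau>) \<in> ?T" "z = ?join (c, set \<sigma>, \<sigma>, \<tau>)"
        by (auto simp: qstirling_on_def)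
      then show "z \<in> ?join ` ?T"
        by blast
    qed
  qed
qed

lemma sum_qstirling_on_blocks:
  assumes "finite S" "S \<noteq> {}"
  shows "(\<Sum>xs\<in>qstirling_on S. f xs) = (\<Sum>c\<in>S. \<Sum>S1\<in>Pow (S - {c}).
    \<Sum>\<sigma>\<in>qstirling_on S1. \<Sum>\<tau>\<in>qstirling_on (S - {c} - S1). f (c # \<sigma> @ c # \<tau>))"
proof -
  have fin: "finite (qstirling_on A)" if "A \<subseteq> S" for A
    using assms(1) that by (auto intro: finite_qstirling_on finite_subset)
  have "(\<Sum>xs\<in>qstirling_on S. f xs) = (\<Sum>(c, S1, \<sigma>, \<tau>)\<in>(SIGMA c:S. SIGMA S1:Pow (S - {c}).
      qstirling_on S1 \<times> qstirling_on (S - {c} - S1)). f (c # \<sigma> @ c # \<tau>))"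
    using sum.reindex_bij_betw[OF bij_betw_qstirling_on_blocks[OF assms(2)], of f]
    by (simp add: case_prod_unfold)
  also have "\<dots> = (\<Sum>c\<in>S. \<Sum>(S1, \<sigma>, \<tau>)\<in>(SIGMA S1:Pow (S - {c}).
      qstirling_on S1 \<times> qstirling_on (S - {c} - S1)). f (c # \<sigma> @ c # \<tau>))"
    by (subst sum.Sigma) (use assms(1) in \<open>auto intro!: finite_SigmaI fin\<close>)
  also have "\<dots> = (\<Sum>c\<in>S. \<Sum>S1\<in>Pow (S - {c}).
      \<Sum>\<sigma>\<in>qstirling_on S1. \<Sum>\<tau>\<in>qstirling_on (S - {c} - S1). f (c # \<sigma> @ c # \<tau>))"
  proof (rule sum.cong[OF refl])
    fix c assume "c \<in> S"
    have "finite (qstirling_on S1 \<times> qstirling_on (S - {c} - S1))" if "S1 \<subseteq> S - {c}" for S1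
      using that by (auto intro!: fin)
    with assms(1) have "(\<Sum>(S1, \<sigma>, \<tau>)\<in>(SIGMA S1:Pow (S - {c}).
        qstirling_on S1 \<times> qstirling_on (S - {c} - S1)). f (c # \<sigma> @ c # \<tau>))
      = (\<Sum>S1\<in>Pow (S - {c}). \<Sum>(\<sigma>, \<tau>)\<in>qstirling_on S1 \<times> qstirling_on (S - {c} - S1). f (c # \<sigma> @ c # \<tau>))"
      by (intro sum.Sigma[symmetric]) auto
    then show "(\<Sum>(S1, \<sigma>, \<tau>)\<in>(SIGMA S1:Pow (S - {c}).
        qstirling_on S1 \<times> qstirling_on (S - {c} - S1)). f (c # \<sigma> @ c # \<tau>))
      = (\<Sum>S1\<in>Pow (S - {c}). \<Sum>\<sigma>\<in>qstirling_on S1. \<Sum>\<tau>\<in>qstirling_on (S - {c} - S1). f (c # \<sigma> @ c # \<tau>))"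
      by (simp add: sum.cartesian_product)
  qed
  finally show ?thesis .
qed

section \<open>The block decomposition\<close>

definition qs_des_poly :: "nat \<Rightarrow> nat set \<Rightarrow> nat \<Rightarrow> rat poly" where
  "qs_des_poly u S v = (\<Sum>xs\<in>qstirling_on S. monom 1 (framed_des u xs v))"

lemma Qbar_eq_qs_des_poly: "Qbar n = qs_des_poly 0 {1..n} 0"
proof -
  have "des xs = framed_des 0 xs 0" if "xs \<in> qstirling_on {1..n}" for xs
    using that by (intro des_eq_framed_des) (auto simp: qstirling_on_def)
  then show ?thesis
    unfolding Qbar_def qs_des_poly_def quasi_stirling_eq_qstirling_on by simp
qed

lemma qs_des_poly_empty: "qs_des_poly u {} v = monom 1 (of_bool (v < u))"
proof -
  have "qstirling_on {} = {[] :: nat list}"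
    by (auto simp: qstirling_on_def qstirling.Nil)
  then show ?thesis
    unfolding qs_des_poly_def by simp
qed

lemma qs_des_poly_blocks:
  assumes "finite S" "S \<noteq> {}"
  shows "qs_des_poly u S v = (\<Sum>c\<in>S. \<Sum>S1\<in>Pow (S - {c}).
    monom 1 (of_bool (c < u)) * (qs_des_poly c S1 c * qs_des_poly c (S - {c} - S1) v))"
proof -
  have "monom 1 (framed_des u (c # \<sigma> @ c # \<tau>) v)
      = monom 1 (of_bool (c < u)) * (monom 1 (framed_des c \<sigma> c) * monom (1::rat) (framed_des c \<tau> v))"
    for c \<sigma> \<tau>
    by (simp add: framed_des_append mult_monom)
  moreover have "(\<Sum>\<sigma>\<in>A. \<Sum>\<tau>\<in>B. a * (f \<sigma> * g \<tau>)) = a * (sum f A * sum g B)"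
    for a :: "rat poly" and A B :: "nat list set" and f g
    unfolding sum_product by (simp only: sum_distrib_left)
  ultimately show ?thesis
    unfolding qs_des_poly_def sum_qstirling_on_blocks[OF assms] by simp
qed

text \<open>The descent polynomial of sequences of \<open>k\<close> quasi-Stirling permutations on disjoint
  alphabets with \<open>m\<close> letters in all; it is \<open>m!\<close> times the coefficient of \<open>z\<^sup>m\<close> in \<open>QbarF\<^sup>k\<close>.\<close>
fun qs_forest :: "nat \<Rightarrow> nat \<Rightarrow> rat poly" where
  "qs_forest 0 m = of_bool (m = 0)"
| "qs_forest (Suc k) m = (\<Sum>j\<le>m. of_nat (m choose j) * (Qbar j * qs_forest k (m - j)))"

lemma qs_forest_Suc_Pow:
  "finite T \<Longrightarrow> qs_forest (Suc k) (card T) = (\<Sum>S1\<in>Pow T. Qbar (card S1) * qs_forest k (card (T - S1)))"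
proof -
  assume "finite T"
  then have "card (T - S1) = card T - card S1" if "S1 \<in> Pow T" for S1
    using that by (auto simp: card_Diff_subset finite_subset)
  with sum_Pow_card[OF \<open>finite T\<close>, of "\<lambda>j. Qbar j * qs_forest k (card T - j)"] show ?thesis
    by simp
qed

text \<open>Counts quasi-Stirling permutations through their top-level blocks
  \<open>c\<^sub>1 \<sigma>\<^sub>1 c\<^sub>1 \<dots> c\<^sub>k \<sigma>\<^sub>k c\<^sub>k\<close>: the letters \<open>C = {c\<^sub>1, \<dots>, c\<^sub>k}\<close> appear as a permutation
  and the \<open>\<sigma>\<^sub>i\<close> form a \<open>qs_forest\<close> on the remaining letters.\<close>
definition qs_spine_poly :: "nat \<Rightarrow> nat set \<Rightarrow> nat \<Rightarrow> rat poly" where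
  "qs_spine_poly u S v = (\<Sum>C\<in>Pow S. perm_des_poly u C v * qs_forest (card C) (card (S - C)))"

lemma qs_spine_poly_empty: "qs_spine_poly u {} v = monom 1 (of_bool (v < u))"
  by (simp add: qs_spine_poly_def perm_des_poly_empty)

lemma qs_spine_poly_Cons:
  assumes "finite S" "S \<noteq> {}"
  shows "qs_spine_poly u S v = (\<Sum>c\<in>S. \<Sum>C\<in>Pow (S - {c}).
    monom 1 (of_bool (c < u)) * perm_des_poly c C v * qs_forest (Suc (card C)) (card (S - {c} - C)))"
proof -
  have "qs_spine_poly u S v = (\<Sum>C\<in>Pow S. \<Sum>c\<in>C.
      monom 1 (of_bool (c < u)) * perm_des_poly c (C - {c}) v * qs_forest (card C) (card (S - C)))"
    unfolding qs_spine_poly_def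
  proof (rule sum.cong[OF refl])
    fix C assume C: "C \<in> Pow S"
    show "perm_des_poly u C v * qs_forest (card C) (card (S - C)) = (\<Sum>c\<in>C.
        monom 1 (of_bool (c < u)) * perm_des_poly c (C - {c}) v * qs_forest (card C) (card (S - C)))"
    proof (cases "C = {}")
      case True
      with assms show ?thesis by simp
    next
      case False
      moreover have "finite C"
        using C assms(1) by (auto intro: finite_subset)
      ultimately show ?thesis
        by (simp add: perm_des_poly_Cons sum_distrib_right)
    qed
  qed
  also have "\<dots> = (\<Sum>c\<in>S. \<Sum>C\<in>Pow (S - {c}). monom 1 (of_bool (c < u)) * perm_des_poly c (insert c C - {c}) v
      * qs_forest (card (insert c C)) (card (S - insert c C)))"
    by (rule sum_Pow_sum_member[OF assms(1)])
  also have "\<dots> = (\<Sum>c\<in>S. \<Sum>C\<in>Pow (S - {c}).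
      monom 1 (of_bool (c < u)) * perm_des_poly c C v * qs_forest (Suc (card C)) (card (S - {c} - C)))"
  proof (intro sum.cong refl)
    fix c C assume C: "C \<in> Pow (S - {c})"
    with assms(1) have "finite C" "c \<notin> C"
      by (auto intro: finite_subset)
    with C have "insert c C - {c} = C" "card (insert c C) = Suc (card C)" "S - insert c C = S - {c} - C"
      by auto
    then show "monom 1 (of_bool (c < u)) * perm_des_poly c (insert c C - {c}) v
        * qs_forest (card (insert c C)) (card (S - insert c C))
      = monom 1 (of_bool (c < u)) * perm_des_poly c C v * qs_forest (Suc (card C)) (card (S - {c} - C))"
      by (simp only:)
  qed
  finally show ?thesis .
qed

lemma qs_spine_poly_blocks:
  assumes "finite S" "S \<noteq> {}"
  shows "qs_spine_poly u S v = (\<Sum>c\<in>S. \<Sum>S1\<in>Pow (S - {c}).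
    monom 1 (of_bool (c < u)) * (Qbar (card S1) * qs_spine_poly c (S - {c} - S1) v))"
proof -
  define summand where "summand = (\<lambda>c C S1. monom 1 (of_bool (c < u)) * perm_des_poly c C v
    * (Qbar (card S1) * qs_forest (card C) (card (S - {c} - S1 - C))))"
  have "qs_spine_poly u S v = (\<Sum>c\<in>S. \<Sum>C\<in>Pow (S - {c}). \<Sum>S1\<in>Pow (S - {c} - C). summand c C S1)"
    unfolding qs_spine_poly_Cons[OF assms]
  proof (intro sum.cong refl)
    fix c C assume "C \<in> Pow (S - {c})"
    moreover have "S - {c} - C - S1 = S - {c} - S1 - C" for S1
      by blast
    ultimately show "monom 1 (of_bool (c < u)) * perm_des_poly c C v * qs_forest (Suc (card C)) (card (S - {c} - C))
        = (\<Sum>S1\<in>Pow (S - {c} - C). summand c C S1)"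
      using assms(1) by (simp add: qs_forest_Suc_Pow summand_def sum_distrib_left del: qs_forest.simps(2))
  qed
  also have "\<dots> = (\<Sum>c\<in>S. \<Sum>S1\<in>Pow (S - {c}). \<Sum>C\<in>Pow (S - {c} - S1). summand c C S1)"
    by (rule sum.cong[OF refl], rule sum_Pow_Diff_swap) (use assms(1) in auto)
  also have "\<dots> = (\<Sum>c\<in>S. \<Sum>S1\<in>Pow (S - {c}).
      monom 1 (of_bool (c < u)) * (Qbar (card S1) * qs_spine_poly c (S - {c} - S1) v))"
    unfolding qs_spine_poly_def sum_distrib_left summand_def by (simp add: mult_ac)
  finally show ?thesis .
qed

lemma qs_spine_poly_cyclic:
  assumes "finite S" "0 \<notin> S" "c \<notin> S"
  shows "qs_spine_poly c S c = (\<Sum>k\<le>card S. of_nat (card S choose k) * (Eulerian k * qs_forest k (card S - k)))"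
proof -
  have "qs_spine_poly c S c = (\<Sum>C\<in>Pow S. Eulerian (card C) * qs_forest (card C) (card S - card C))"
    unfolding qs_spine_poly_def
  proof (rule sum.cong[OF refl])
    fix C assume "C \<in> Pow S"
    with assms have "perm_des_poly c C c = Eulerian (card C)" "card (S - C) = card S - card C"
      by (auto intro!: perm_des_poly_cyclic card_Diff_subset intro: finite_subset)
    then show "perm_des_poly c C c * qs_forest (card C) (card (S - C))
        = Eulerian (card C) * qs_forest (card C) (card S - card C)"
      by simp
  qed
  then show ?thesis
    using sum_Pow_card[OF assms(1), of "\<lambda>k. Eulerian k * qs_forest k (card S - k)"] by simp
qed

text \<open>Both sides satisfy the same block recursion. The inner factors \<open>qs_des_poly c S1 c\<close>
  equal \<open>Qbar (card S1)\<close> by induction, because the spine formula does not depend on the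
  boundary letter (\<open>qs_spine_poly_cyclic\<close>).\<close>
lemma qs_des_poly_eq_qs_spine_poly:
  "finite S \<Longrightarrow> 0 \<notin> S \<Longrightarrow> qs_des_poly u S v = qs_spine_poly u S v"
proof (induction "card S" arbitrary: S u v rule: less_induct)
  case less
  show ?case
  proof (cases "S = {}")
    case True
    then show ?thesis by (simp add: qs_des_poly_empty qs_spine_poly_empty)
  next
    case False
    have smaller: "card T < card S" if "T \<subseteq> S - {c}" "c \<in> S" for T c
      using that less.prems(1) by (meson Diff_subset card_Diff1_less card_mono finite_Diff le_less_trans)
    have IH: "qs_des_poly u' T v' = qs_spine_poly u' T v'" if "T \<subseteq> S - {c}" "c \<in> S" for T c u' v'
      using that less.prems smaller[OF that] by (intro less.hyps) (auto intro: finite_subset)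
    have inner: "qs_des_poly c S1 c = Qbar (card S1)" if "S1 \<subseteq> S - {c}" "c \<in> S" for S1 c
    proof -
      have "qs_des_poly c S1 c = qs_spine_poly c S1 c"
        using IH[OF that] .
      also have "\<dots> = qs_spine_poly 0 {1..card S1} 0"
      proof -
        have "finite S1" "0 \<notin> S1" "c \<notin> S1"
          using that less.prems by (auto intro: finite_subset)
        then show ?thesis
          by (simp add: qs_spine_poly_cyclic)
      qed
      also have "\<dots> = qs_des_poly 0 {1..card S1} 0"
        using that smaller[OF that] by (intro less.hyps[symmetric]) auto
      finally show ?thesis
        by (simp add: Qbar_eq_qs_des_poly)
    qed
    show ?thesis
      unfolding qs_des_poly_blocks[OF less.prems(1) False] qs_spine_poly_blocks[OF less.prems(1) False]
    proof (intro sum.cong refl)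
      fix c S1 assume "c \<in> S" "S1 \<in> Pow (S - {c})"
      then show "monom 1 (of_bool (c < u)) * (qs_des_poly c S1 c * qs_des_poly c (S - {c} - S1) v)
        = monom 1 (of_bool (c < u)) * (Qbar (card S1) * qs_spine_poly c (S - {c} - S1) v)"
        using inner[of S1 c] IH[of "S - {c} - S1" c] by auto
    qed
  qed
qed

lemma Qbar_eq_sum_Eulerian_qs_forest:
  "Qbar n = (\<Sum>k\<le>n. of_nat (n choose k) * (Eulerian k * qs_forest k (n - k)))"
  using qs_spine_poly_cyclic[of "{1..n}" 0] qs_des_poly_eq_qs_spine_poly[of "{1..n}" 0 0]
  by (simp add: Qbar_eq_qs_des_poly)

section \<open>Exponential generating functions\<close>

definition egf :: "(nat \<Rightarrow> 'a::field_char_0 poly) \<Rightarrow> 'a poly fps" where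
  "egf f = Abs_fps (\<lambda>n. smult (1 / fact n) (f n))"

lemma egf_nth [simp]: "egf f $ n = smult (1 / fact n) (f n)"
  by (simp add: egf_def)

lemma smult_sum_right: "smult c (\<Sum>i\<in>S. f i) = (\<Sum>i\<in>S. smult c (f i))"
  by (induction S rule: infinite_finite_induct) (auto simp: smult_add_right)

lemma smult_fact_mult_smult_fact:
  fixes p q :: "'a::field_char_0 poly"
  assumes "k \<le> n"
  shows "smult (1 / fact k) p * smult (1 / fact (n - k)) q = smult (1 / fact n) (of_nat (n choose k) * (p * q))"
proof -
  have "1 / fact n * of_nat (n choose k) = (1 / fact (n - k) * (1 / fact k) :: 'a)"
    using binomial_fact[OF assms] by (simp add: field_simps)
  then show ?thesis
    by (simp only: of_nat_mult_conv_smult mult_smult_left mult_smult_right smult_smult)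
qed

lemma egf_mult: "egf f * egf g = egf (\<lambda>n. \<Sum>k\<le>n. of_nat (n choose k) * (f k * g (n - k)))"
proof (rule fps_ext)
  fix n
  have "(egf f * egf g) $ n = (\<Sum>k\<le>n. smult (1 / fact k) (f k) * smult (1 / fact (n - k)) (g (n - k)))"
    unfolding fps_mult_nth atLeast0AtMost egf_nth ..
  also have "\<dots> = egf (\<lambda>n. \<Sum>k\<le>n. of_nat (n choose k) * (f k * g (n - k))) $ n"
    unfolding egf_nth smult_sum_right by (intro sum.cong refl smult_fact_mult_smult_fact) simp
  finally show "(egf f * egf g) $ n = egf (\<lambda>n. \<Sum>k\<le>n. of_nat (n choose k) * (f k * g (n - k))) $ n" .
qed

lemma fps_const_mult_egf: "fps_const c * egf f = egf (\<lambda>n. c * f n)"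
  by (rule fps_ext) (simp add: mult_smult_right)

lemma fps_deriv_egf: "fps_deriv (egf f) = egf (\<lambda>n. f (Suc n))"
proof (rule fps_ext)
  fix n
  have "of_nat (Suc n) * (1 / fact (Suc n)) = (1 / fact n :: 'a)"
    by (simp add: field_simps del: of_nat_Suc)
  then show "fps_deriv (egf f) $ n = egf (\<lambda>n. f (Suc n)) $ n"
    by (simp add: of_nat_mult_conv_smult del: of_nat_Suc)
qed

lemma QbarF_eq_egf: "QbarF = egf Qbar"
  by (simp add: QbarF_def egf_def)

lemma EulerF_eq_egf: "EulerF = egf Eulerian"
  by (simp add: EulerF_def egf_def)

lemma QbarF_power: "QbarF ^ k = egf (qs_forest k)"
proof (induction k)
  case 0
  show ?case by (rule fps_ext) simp
next
  case (Suc k)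
  then show ?case
    by (simp add: QbarF_eq_egf egf_mult)
qed

lemma fps_compose_X_mult_nth:
  fixes a q :: "'a::comm_ring_1 fps"
  shows "(a oo (fps_X * q)) $ n = (\<Sum>k\<le>n. a $ k * (q ^ k) $ (n - k))"
  by (simp add: fps_compose_nth power_mult_distrib fps_X_power_mult_nth atLeast0AtMost)

theorem QbarF_eq_compose: "QbarF = EulerF oo (fps_X * QbarF)"
proof (rule fps_ext)
  fix n
  have "(EulerF oo (fps_X * QbarF)) $ n
      = (\<Sum>k\<le>n. smult (1 / fact k) (Eulerian k) * smult (1 / fact (n - k)) (qs_forest k (n - k)))"
    unfolding fps_compose_X_mult_nth EulerF_eq_egf QbarF_power egf_nth ..
  also have "\<dots> = smult (1 / fact n) (Qbar n)"
    unfolding Qbar_eq_sum_Eulerian_qs_forest smult_sum_right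
    by (intro sum.cong refl smult_fact_mult_smult_fact) simp
  finally show "QbarF $ n = (EulerF oo (fps_X * QbarF)) $ n"
    by (simp add: QbarF_eq_egf)
qed

lemma fps_deriv_EulerF: "fps_deriv EulerF = (EulerF + fps_const (t - 1)) * EulerF"
proof -
  have "EulerF + fps_const (t - 1) = egf (\<lambda>k. if k = 0 then t else Eulerian k)"
    by (rule fps_ext) (simp add: EulerF_eq_egf Eulerian_0)
  then show ?thesis
    by (simp add: EulerF_eq_egf fps_deriv_egf egf_mult Eulerian_Suc del: egf_nth)
qed

lemma fps_deriv_exp_1mt: "fps_deriv exp_1mt = fps_const [:1, -1:] * exp_1mt"
proof -
  have exp_1mt_egf: "exp_1mt = egf (\<lambda>n. [:1, -1:] ^ n)"
    by (simp add: exp_1mt_def egf_def)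
  show ?thesis
    unfolding exp_1mt_egf by (simp add: fps_deriv_egf fps_const_mult_egf del: egf_nth)
qed

lemma fps_deriv_eq_mult_imp_zero:
  fixes K A :: "'a::{idom, ring_char_0} fps"
  assumes "fps_deriv K = A * K" "K $ 0 = 0"
  shows "K = 0"
proof -
  have "K $ n = 0" for n
  proof (induction n rule: less_induct)
    case (less n)
    show ?case
    proof (cases n)
      case (Suc m)
      have "(A * K) $ m = 0"
        unfolding fps_mult_nth using less Suc by (intro sum.neutral) auto
      then have "of_nat (Suc m) * K $ Suc m = 0"
        using arg_cong[OF assms(1), of "\<lambda>f. f $ m"] by simp
      then show ?thesis
        using Suc by (simp del: of_nat_Suc)
    qed (use assms(2) in simp)
  qed
  then show ?thesis
    by (simp add: fps_eq_iff)
qed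

text \<open>\<open>K = A (1 - t E) - (1 - t)\<close> satisfies \<open>K' = A K\<close> by \<open>A' = (A + t - 1) A\<close>
  (which is \<open>Eulerian_Suc\<close>) and \<open>E' = (1 - t) E\<close>; since \<open>K(0) = 0\<close>, \<open>K\<close> vanishes.\<close>
lemma EulerF_closed_form: "EulerF * (1 - fps_const [:0, 1:] * exp_1mt) = fps_const [:1, -1:]"
proof -
  define T where "T = (fps_const [:0, 1:] :: rat poly fps)"
  define K where "K = EulerF * (1 - T * exp_1mt) - (1 - T)"
  have const_eqs: "fps_const [:1, -1:] = 1 - T" "fps_const (t - 1) = T - 1"
    by (simp_all add: T_def fps_const_sub one_pCons monom_Suc monom_0)
  have "fps_deriv K = fps_deriv EulerF * (1 - T * exp_1mt) - EulerF * (T * fps_deriv exp_1mt)"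
    by (simp add: K_def T_def algebra_simps)
  also have "\<dots> = EulerF * K"
    unfolding fps_deriv_EulerF fps_deriv_exp_1mt const_eqs K_def by (simp add: algebra_simps)
  finally have "K = 0"
    by (rule fps_deriv_eq_mult_imp_zero) (simp add: K_def T_def EulerF_eq_egf Eulerian_0 exp_1mt_def)
  then show ?thesis
    by (simp add: K_def T_def const_eqs)
qed

theorem QbarF_closed_form:
  "QbarF * (1 - fps_const [:0, 1:] * (exp_1mt oo (fps_X * QbarF))) = fps_const [:1, -1:]"
proof -
  define h where "h = fps_X * QbarF"
  have "h $ 0 = 0"
    by (simp add: h_def)
  have "QbarF * (1 - fps_const [:0, 1:] * (exp_1mt oo h))
      = (EulerF oo h) * ((1 - fps_const [:0, 1:] * exp_1mt) oo h)"
    using QbarF_eq_compose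
    by (simp add: h_def fps_compose_sub_distrib fps_compose_mult_distrib[OF \<open>h $ 0 = 0\<close>]
        fps_const_mult_apply_left)
  also have "\<dots> = fps_const [:1, -1:]"
    by (simp add: fps_compose_mult_distrib[OF \<open>h $ 0 = 0\<close>, symmetric] EulerF_closed_form)
  finally show ?thesis
    by (simp add: h_def)
qed

section \<open>Lagrange inversion\<close>

lemma fps_mult_compose_X_mult_nth:
  fixes a g q :: "'a::comm_ring_1 fps"
  shows "(g * (a oo (fps_X * q))) $ n = (\<Sum>j\<le>n. a $ j * (g * (fps_X ^ j * q ^ j)) $ n)"
proof -
  have "(g * (a oo (fps_X * q))) $ n = (\<Sum>i\<le>n. \<Sum>j\<le>n. g $ i * (a $ j * (fps_X ^ j * q ^ j) $ (n - i)))"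
  proof -
    have "(a oo (fps_X * q)) $ (n - i) = (\<Sum>j\<le>n. a $ j * (fps_X ^ j * q ^ j) $ (n - i))" if "i \<le> n" for i
      unfolding fps_compose_nth power_mult_distrib atLeast0AtMost
      by (rule sum.mono_neutral_left) (use that in \<open>auto simp: fps_X_power_mult_nth\<close>)
    then show ?thesis
      by (simp add: fps_mult_nth atLeast0AtMost sum_distrib_left)
  qed
  also have "\<dots> = (\<Sum>j\<le>n. a $ j * (g * (fps_X ^ j * q ^ j)) $ n)"
    by (subst sum.swap) (simp add: fps_mult_nth atLeast0AtMost sum_distrib_left mult.left_commute)
  finally show ?thesis .
qed

lemma fps_power_Suc_nth_of_compose_fixpoint:
  fixes a q :: "'a::comm_ring_1 fps"
  assumes "q = a oo (fps_X * q)"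
  shows "(q ^ Suc k) $ n = (\<Sum>j\<le>n. a $ j * (q ^ (j + k)) $ (n - j))"
proof -
  have "(q ^ Suc k) $ n = (q ^ k * (a oo (fps_X * q))) $ n"
    using assms by (metis power_Suc2)
  also have "\<dots> = (\<Sum>j\<le>n. a $ j * (fps_X ^ j * q ^ (j + k)) $ n)"
    by (simp add: fps_mult_compose_X_mult_nth power_add algebra_simps)
  also have "\<dots> = (\<Sum>j\<le>n. a $ j * (q ^ (j + k)) $ (n - j))"
    by (simp add: fps_X_power_mult_nth)
  finally show ?thesis .
qed

lemma fps_power_Suc_nth_weighted:
  fixes a :: "'a::comm_ring_1 fps"
  shows "of_nat (Suc N) * (\<Sum>j\<le>n. of_nat j * a $ j * (a ^ N) $ (n - j)) = of_nat n * (a ^ Suc N) $ n"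
proof -
  have "(\<Sum>j\<le>n. of_nat j * a $ j * (a ^ N) $ (n - j)) = (fps_X * fps_deriv a * a ^ N) $ n"
  proof -
    have "(fps_X * fps_deriv a) $ j = of_nat j * a $ j" for j
      by (cases j) simp_all
    then show ?thesis
      by (simp add: fps_mult_nth atLeast0AtMost)
  qed
  moreover have "fps_deriv (a ^ Suc N) = fps_const (of_nat (Suc N)) * fps_deriv a * a ^ N"
    using fps_deriv_power[of a "Suc N"] by (simp only: diff_Suc_1)
  then have "fps_const (of_nat (Suc N)) * (fps_X * fps_deriv a * a ^ N) = fps_X * fps_deriv (a ^ Suc N)"
    by (simp only: mult_ac)
  ultimately have "of_nat (Suc N) * (\<Sum>j\<le>n. of_nat j * a $ j * (a ^ N) $ (n - j))
      = (fps_X * fps_deriv (a ^ Suc N)) $ n"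
    by (simp only: fps_mult_left_const_nth[symmetric])
  also have "\<dots> = of_nat n * (a ^ Suc N) $ n"
    by (cases n) (simp_all del: of_nat_Suc power_Suc)
  finally show ?thesis .
qed

theorem fps_lagrange_inversion:
  fixes a q :: "'a::{idom, ring_char_0} fps"
  assumes fixpoint: "q = a oo (fps_X * q)"
  shows "of_nat (n + k) * (q ^ k) $ n = of_nat k * (a ^ (n + k)) $ n"
proof (induction n arbitrary: k rule: less_induct)
  case (less n)
  show ?case
  proof (induction k)
    case (Suc k)
    define N where "N = n + k"
    show ?case
    proof (cases "N = 0")
      case True
      then show ?thesis
        using fps_compose_nth_0[of a "fps_X * q"] fixpoint by (simp add: N_def)
    next
      case False
      have IH: "of_nat N * (q ^ (j + k)) $ (n - j) = of_nat (j + k) * (a ^ N) $ (n - j)" if "j \<le> n" for j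
        using that less[of "n - j" "j + k"] Suc.IH unfolding N_def by (cases "j = 0") auto
      have "of_nat N * (q ^ Suc k) $ n = (\<Sum>j\<le>n. a $ j * (of_nat (j + k) * (a ^ N) $ (n - j)))"
        unfolding fps_power_Suc_nth_of_compose_fixpoint[OF fixpoint] sum_distrib_left
        by (intro sum.cong refl) (simp add: IH mult.left_commute)
      also have "\<dots> = (\<Sum>j\<le>n. of_nat j * a $ j * (a ^ N) $ (n - j)) + of_nat k * (a ^ Suc N) $ n"
        by (simp add: sum.distrib sum_distrib_left algebra_simps fps_mult_nth atLeast0AtMost)
      finally have "of_nat N * (of_nat (Suc N) * (q ^ Suc k) $ n)
          = of_nat N * (of_nat (Suc k) * (a ^ Suc N) $ n)"
        using fps_power_Suc_nth_weighted[where a = a and N = N and n = n] unfolding N_def by (simp add: algebra_simps)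
      moreover have "(of_nat N :: 'a) \<noteq> 0"
        using False by simp
      ultimately have "of_nat (Suc N) * (q ^ Suc k) $ n = of_nat (Suc k) * (a ^ Suc N) $ n"
        by simp
      then show ?thesis
        by (simp add: N_def)
    qed
  qed simp
qed

lemma Qbar_eq_Lagrange: "Qbar n = smult (fact n / of_nat (n + 1)) ((EulerF ^ (n + 1)) $ n)"
proof -
  have "of_nat (n + 1) * (QbarF ^ 1) $ n = of_nat 1 * (EulerF ^ (n + 1)) $ n"
    by (rule fps_lagrange_inversion[OF QbarF_eq_compose])
  then have lagrange: "smult (of_nat (n + 1)) (QbarF $ n) = (EulerF ^ (n + 1)) $ n"
    by (simp only: power_one_right of_nat_1 mult_1 of_nat_mult_conv_smult)
  have "Qbar n = smult (fact n / of_nat (n + 1)) (smult (of_nat (n + 1)) (QbarF $ n))"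
    by (simp add: QbarF_eq_egf del: of_nat_Suc)
  then show ?thesis
    unfolding lagrange .
qed

theorem theorem2p3:
  shows "QbarF = fps_compose EulerF (fps_X * QbarF)
     \<and> QbarF * (1 - fps_const [:0, 1:] * fps_compose exp_1mt (fps_X * QbarF)) = fps_const [:1, -1:]
     \<and> (\<forall>n. Qbar n = smult (fact n / of_nat (n + 1)) (fps_nth (EulerF ^ (n + 1)) n))"
  using QbarF_eq_compose QbarF_closed_form Qbar_eq_Lagrange by blast

end
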